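(* Let $\mathcal{X}$ be a finite set, $\pi$ a probability distribution on $\mathcal{X}$ with $\pi(x)>0$ for all $x$, $p>1$, $\alpha>0$, and $\mathcal{N}$ a symmetric neighborhood mapping on $\mathcal{X}$ (with $x\notin\mathcal{N}(x)$) such that $\max_{x}|\mathcal{N}(x)|\le p^\alpha$. Suppose there exist $x^*\in\mathcal{X}$, an operator $\mathsf{T}\colon\mathcal{X}\to\mathcal{X}$ and a constant $\nu>\alpha$ such that $\mathsf{T}(x^* )=x^*$ and for every $x\neq x^*$, $\mathsf{T}(x)\in\mathcal{N}(x)$ and $\pi(\mathsf{T}(x))\ge p^\nu\pi(x)$ (Assumption 1). Then for any transition matrix $P$ on $\mathcal{X}$ that is irreducible and reversible with respect to $\pi$, $$\mathrm{Gap}(P)\ge\kappa(p,\alpha,\nu)\min_{x\neq x^*}P(x,\mathsf{T}(x)),\qquad \kappa(p,\alpha,\nu)=\tfrac12\{1-p^{-(\nu-\alpha)/2}\}^3,$$ and for any transition rate matrix $Q$ on $\mathcal{X}$ that is irreducible and reversible with respect to $\pi$, $\mathrm{Gap}(Q)\ge\kappa(p,\alpha,\nu)\min_{x\neq x^*}Q(x,\mathsf{T}(x))$.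
   Context: For an irreducible reversible transition matrix $P$ with eigenvalues $1=\lambda_1(P)>\lambda_2(P)\ge\cdots$, $\mathrm{Gap}(P)=1-\lambda_2(P)$. For an irreducible reversible transition rate matrix $Q$ with eigenvalues $0=\lambda_1(Q)>\lambda_2(Q)\ge\cdots$, $\mathrm{Gap}(Q)=-\lambda_2(Q)$. *)

theory Defs
  imports "HOL-Analysis.Analysis" "HOL-Computational_Algebra.Polynomial"
begin


definition charpoly :: "('x::finite \<Rightarrow> 'x \<Rightarrow> real) \<Rightarrow> real poly" where
  "charpoly M = det (\<chi> i j. (if i = j then [:0, 1:] else 0) - [:M i j:])"

text \<open>Real eigenvalues (with algebraic multiplicity), in non-increasing order:
  lambda_1 \<ge> lambda_2 \<ge> ... .  For reversible matrices all eigenvalues are real.\<close>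
definition eigenvalues_desc :: "('x::finite \<Rightarrow> 'x \<Rightarrow> real) \<Rightarrow> real list" where
  "eigenvalues_desc M = rev (sorted_list_of_multiset (proots (charpoly M)))"

definition lambda2 :: "('x::finite \<Rightarrow> 'x \<Rightarrow> real) \<Rightarrow> real" where
  "lambda2 M = eigenvalues_desc M ! 1"

definition Gap_P :: "('x::finite \<Rightarrow> 'x \<Rightarrow> real) \<Rightarrow> real" where
  "Gap_P P = 1 - lambda2 P"

definition Gap_Q :: "('x::finite \<Rightarrow> 'x \<Rightarrow> real) \<Rightarrow> real" where
  "Gap_Q Q = - lambda2 Q"

definition prob_dist :: "('x::finite \<Rightarrow> real) \<Rightarrow> bool" where
  "prob_dist \<pi> \<longleftrightarrow> (\<forall>x. \<pi> x \<ge> 0) \<and> (\<Sum>x\<in>UNIV. \<pi> x) = 1"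

definition transition_matrix :: "('x::finite \<Rightarrow> 'x \<Rightarrow> real) \<Rightarrow> bool" where
  "transition_matrix P \<longleftrightarrow> (\<forall>x y. P x y \<ge> 0) \<and> (\<forall>x. (\<Sum>y\<in>UNIV. P x y) = 1)"

definition rate_matrix :: "('x::finite \<Rightarrow> 'x \<Rightarrow> real) \<Rightarrow> bool" where
  "rate_matrix Q \<longleftrightarrow> (\<forall>x y. x \<noteq> y \<longrightarrow> Q x y \<ge> 0) \<and> (\<forall>x. (\<Sum>y\<in>UNIV. Q x y) = 0)"

definition irreducible_mat :: "('x \<Rightarrow> 'x \<Rightarrow> real) \<Rightarrow> bool" where
  "irreducible_mat M \<longleftrightarrow> (\<forall>x y. (x, y) \<in> {(a, b). a \<noteq> b \<and> M a b > 0}\<^sup>*)"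

definition reversible_wrt :: "('x \<Rightarrow> real) \<Rightarrow> ('x \<Rightarrow> 'x \<Rightarrow> real) \<Rightarrow> bool" where
  "reversible_wrt \<pi> M \<longleftrightarrow> (\<forall>x y. \<pi> x * M x y = \<pi> y * M y x)"

definition symmetric_nbhd :: "('x \<Rightarrow> 'x set) \<Rightarrow> bool" where
  "symmetric_nbhd N \<longleftrightarrow> (\<forall>x y. y \<in> N x \<longleftrightarrow> x \<in> N y) \<and> (\<forall>x. x \<notin> N x)"

definition kappa :: "real \<Rightarrow> real \<Rightarrow> real \<Rightarrow> real" where
  "kappa p \<alpha> \<nu> = (1/2) * (1 - p powr (-(\<nu> - \<alpha>) / 2)) ^ 3"

end

(* For a matrix A with row sums mu that is reversible with respect to a positive
   distribution pi, the eigenvalues are real (A is self-adjoint in the pi-weighted inner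
   product), and a rank-one deflation A + a 1 pi^T moves the eigenvalue mu out of the way
   without changing the others; hence every eigenvalue below the top one has an
   eigenvector f of pi-mean zero.  For such f the Dirichlet form
   sum pi(x) A(x,y) (f x - f y)^2 equals 2 (mu - lambda) |f|^2 and dominates
   m sum pi(x) (f x - f (T x))^2, m the least rate A(x, T x).  Telescoping f x - f x*
   along the T-orbit of x and weighting the i-th increment by q^-i in Cauchy-Schwarz,
   where q^2 = p^alpha / p^nu bounds the pi-mass of each fibre of T relative to its image,
   gives the Poincare inequality |f|^2 <= (1 - q)^-2 sum pi(x) (f x - f (T x))^2.
   Hence mu - lambda >= m (1 - q)^2 / 2 >= kappa m. *)

theory Submission
  imports Defs "HOL-Computational_Algebra.Fundamental_Theorem_Algebra"
begin

lemma map_poly_of_real_add: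
  "map_poly (of_real :: real \<Rightarrow> 'a::{real_algebra_1,comm_ring_1}) (p + q) =
     map_poly of_real p + map_poly of_real q"
  by (simp add: poly_eq_iff coeff_map_poly)

lemma map_poly_of_real_mult:
  "map_poly (of_real :: real \<Rightarrow> 'a::{real_algebra_1,comm_ring_1}) (p * q) =
     map_poly of_real p * map_poly of_real q"
  by (simp add: poly_eq_iff coeff_map_poly coeff_mult)

lemma map_poly_of_real_sum:
  "map_poly (of_real :: real \<Rightarrow> 'a::{real_algebra_1,comm_ring_1}) (sum f S) =
     (\<Sum>x\<in>S. map_poly of_real (f x))"
  by (induction S rule: infinite_finite_induct) (auto simp: map_poly_of_real_add)

lemma map_poly_of_real_prod:
  "map_poly (of_real :: real \<Rightarrow> 'a::{real_algebra_1,comm_ring_1}) (prod f S) =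
     (\<Prod>x\<in>S. map_poly of_real (f x))"
  by (induction S rule: infinite_finite_induct) (auto simp: map_poly_of_real_mult)

lemma map_poly_of_real_of_int:
  "map_poly (of_real :: real \<Rightarrow> 'a::{real_algebra_1,comm_ring_1}) (of_int k) = of_int k"
  by (simp add: of_int_poly map_poly_pCons)

lemma poly_map_poly_of_real:
  "poly (map_poly (of_real :: real \<Rightarrow> 'a::{real_algebra_1,comm_ring_1}) p) (of_real x) =
     of_real (poly p x)"
  by (induction p) (auto simp: map_poly_pCons)

lemma poly_charpoly: "poly (charpoly M) t = det (\<chi> i j. (if i = j then t else 0) - M i j)"
proof -
  have "poly ((if i = j then [:0, 1:] else 0) - [:c:]) t = (if i = j then t else 0) - c"
    for i j :: 'a and c by simp
  then show ?thesis unfolding charpoly_def det_def by (simp add: poly_sum poly_prod)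
qed

lemma poly_map_poly_charpoly:
  "poly (map_poly of_real (charpoly M)) z =
     det (\<chi> i j. (if i = j then z else 0) - complex_of_real (M i j))"
proof -
  have "poly (map_poly of_real ((if i = j then [:0, 1:] else 0) - [:c:])) z =
      (if i = j then z else 0) - complex_of_real c" for i j :: 'a and c
    by (cases "i = j") (simp_all add: map_poly_pCons)
  then show ?thesis
    unfolding charpoly_def det_def
    by (simp add: map_poly_of_real_sum map_poly_of_real_mult map_poly_of_real_prod
        map_poly_of_real_of_int poly_sum poly_prod)
qed

lemma coeff_charpoly_CARD: "coeff (charpoly (M :: 'x::finite \<Rightarrow> 'x \<Rightarrow> real)) CARD('x) = 1"
proof -
  define E :: "'x \<Rightarrow> 'x \<Rightarrow> real poly"
    where "E = (\<lambda>i j. (if i = j then [:0, 1:] else 0) - [:M i j:])"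
  define t where "t = (\<lambda>\<sigma>::'x \<Rightarrow> 'x. of_int (sign \<sigma>) * (\<Prod>i\<in>UNIV. E i (\<sigma> i)))"
  have charpoly_eq: "charpoly M = (\<Sum>\<sigma>\<in>{\<sigma>. \<sigma> permutes UNIV}. t \<sigma>)"
    unfolding charpoly_def det_def t_def E_def by simp
  have degree_E: "degree (E i j) \<le> (if j = i then 1 else 0)" for i j
    unfolding E_def by (cases "i = j") (auto intro: order.trans[OF degree_diff_le])
  have coeff_t: "coeff (t \<sigma>) CARD('x) = 0" if "\<sigma> \<noteq> id" for \<sigma>
  proof -
    obtain i0 where i0: "\<sigma> i0 \<noteq> i0" using \<open>\<sigma> \<noteq> id\<close> by (metis eq_id_iff)
    have "degree (t \<sigma>) \<le> degree (\<Prod>i\<in>UNIV. E i (\<sigma> i))"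
      unfolding t_def using degree_mult_le[of "of_int (sign \<sigma>)"] by simp
    also have "\<dots> \<le> (\<Sum>i\<in>UNIV. degree (E i (\<sigma> i)))"
      using degree_prod_sum_le[of UNIV "\<lambda>i. E i (\<sigma> i)"] by (simp add: o_def)
    also have "\<dots> \<le> (\<Sum>i\<in>UNIV. (if \<sigma> i = i then 1 else 0))"
      by (intro sum_mono degree_E)
    also have "\<dots> < (\<Sum>i\<in>(UNIV::'x set). 1)"
      by (rule sum_strict_mono_ex1) (use i0 in auto)
    finally show ?thesis by (intro coeff_eq_0) simp
  qed
  have coeff_t_id: "coeff (t id) CARD('x) = 1"
  proof -
    have "t id = (\<Prod>i\<in>UNIV. [:- M i i, 1:])" unfolding t_def E_def by simp
    moreover have "degree (\<Prod>i\<in>(UNIV::'x set). [:- M i i, 1:]) = CARD('x)"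
      by (subst degree_prod_eq_sum_degree) auto
    moreover have "lead_coeff (\<Prod>i\<in>(UNIV::'x set). [:- M i i, 1:]) = 1"
      by (simp add: lead_coeff_prod)
    ultimately show ?thesis by simp
  qed
  have "coeff (charpoly M) CARD('x) =
      coeff (t id) CARD('x) + (\<Sum>\<sigma>\<in>{\<sigma>. \<sigma> permutes UNIV} - {id}. coeff (t \<sigma>) CARD('x))"
    unfolding charpoly_eq coeff_sum by (subst sum.remove[of _ id]) auto
  then show ?thesis using coeff_t_id coeff_t by simp
qed

lemma charpoly_neq_0: "charpoly (M :: 'x::finite \<Rightarrow> 'x \<Rightarrow> real) \<noteq> 0"
  using coeff_charpoly_CARD[of M] by auto

lemma CARD_le_degree_charpoly: "CARD('x) \<le> degree (charpoly (M :: 'x::finite \<Rightarrow> 'x \<Rightarrow> real))"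
  using coeff_charpoly_CARD[of M] by (simp add: le_degree)

lemma det_eq_0_imp_kernel:
  fixes B :: "'a::field^'n^'n"
  assumes "det B = 0"
  obtains v where "v \<noteq> 0" "B *v v = 0"
proof -
  have "\<not> inj ((*v) B)" using det_nz_iff_inj_gen[of "(*v) B"] assms by simp
  then obtain x y where "x \<noteq> y" "B *v x = B *v y" unfolding inj_def by blast
  then show ?thesis by (intro that[of "x - y"]) (simp_all add: matrix_vector_mult_diff_distrib)
qed

lemma eigenvector_if_det_eq_0:
  fixes M :: "'n::finite \<Rightarrow> 'n \<Rightarrow> 'a::field"
  assumes "det (\<chi> i j. (if i = j then z else 0) - M i j) = 0"
  obtains v where "\<exists>x. v x \<noteq> 0" "\<And>x. (\<Sum>y\<in>UNIV. M x y * v y) = z * v x"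
proof -
  obtain w where "w \<noteq> 0" and kernel: "(\<chi> i j. (if i = j then z else 0) - M i j) *v w = 0"
    using det_eq_0_imp_kernel[OF assms] by blast
  show ?thesis
  proof (rule that[of "\<lambda>x. w $ x"])
    show "\<exists>x. w $ x \<noteq> 0" using \<open>w \<noteq> 0\<close> by (metis vec_eq_iff zero_index)
    fix x
    have "(\<Sum>y\<in>UNIV. (if x = y then z else 0) * w $ y) = (\<Sum>y\<in>UNIV. if x = y then z * w $ y else 0)"
      by (rule sum.cong) auto
    moreover have "0 = (\<Sum>y\<in>UNIV. ((if x = y then z else 0) - M x y) * w $ y)"
      using kernel by (simp add: vec_eq_iff matrix_vector_mult_def)
    ultimately show "(\<Sum>y\<in>UNIV. M x y * w $ y) = z * w $ x"
      by (simp add: left_diff_distrib sum_subtractf)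
  qed
qed

lemma charpoly_root_imp_eigenvector:
  assumes "poly (charpoly M) r = 0"
  shows "\<exists>f. (\<exists>x. f x \<noteq> 0) \<and> (\<forall>x. (\<Sum>y\<in>UNIV. M x y * f y) = r * f x)"
proof -
  have "det (\<chi> i j. (if i = j then r else 0) - M i j) = 0"
    using assms by (simp add: poly_charpoly)
  then show ?thesis
  proof (rule eigenvector_if_det_eq_0)
    fix f assume "\<exists>x. f x \<noteq> 0" and "\<And>x. (\<Sum>y\<in>UNIV. M x y * f y) = r * f x"
    then show ?thesis by (intro exI[of _ f]) simp
  qed
qed

lemma reversible_charpoly_root_real:
  fixes A :: "'x::finite \<Rightarrow> 'x \<Rightarrow> real"
  assumes rev: "reversible_wrt \<pi> A" and pi_pos: "\<And>x. \<pi> x > 0"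
    and root: "poly (map_poly of_real (charpoly A)) z = 0"
  shows "Im z = 0"
proof -
  have "det (\<chi> i j. (if i = j then z else 0) - complex_of_real (A i j)) = 0"
    using root by (simp add: poly_map_poly_charpoly)
  then obtain v where "\<exists>x. v x \<noteq> 0" and eig: "\<And>x. (\<Sum>y\<in>UNIV. of_real (A x y) * v y) = z * v x"
    by (rule eigenvector_if_det_eq_0) auto
  define L where "L = (\<Sum>x\<in>UNIV. \<Sum>y\<in>UNIV. of_real (\<pi> x * A x y) * cnj (v x) * v y)"
  define V where "V = (\<Sum>x\<in>UNIV. \<pi> x * (cmod (v x))\<^sup>2)"
  have "L = (\<Sum>x\<in>UNIV. of_real (\<pi> x) * cnj (v x) * (\<Sum>y\<in>UNIV. of_real (A x y) * v y))"
    unfolding L_def sum_distrib_left by (simp add: mult_ac)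
  also have "\<dots> = (\<Sum>x\<in>UNIV. z * (of_real (\<pi> x) * (v x * cnj (v x))))"
    unfolding eig by (intro sum.cong refl) (simp only: mult_ac)
  also have "\<dots> = z * of_real V"
    unfolding V_def sum_distrib_left[symmetric] by (simp add: complex_mult_cnj cmod_power2)
  finally have L_eq: "L = z * of_real V" .
  \<comment> \<open>reversibility makes the form Hermitian\<close>
  have "cnj L = (\<Sum>x\<in>UNIV. \<Sum>y\<in>UNIV. of_real (\<pi> x * A x y) * v x * cnj (v y))"
    unfolding L_def by simp
  also have "\<dots> = (\<Sum>y\<in>UNIV. \<Sum>x\<in>UNIV. of_real (\<pi> x * A x y) * v x * cnj (v y))"
    by (rule sum.swap)
  also have "\<dots> = L"
    unfolding L_def
  proof (intro sum.cong refl)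
    fix a b
    have "\<pi> b * A b a = \<pi> a * A a b" using rev by (simp add: reversible_wrt_def)
    then show "of_real (\<pi> b * A b a) * v b * cnj (v a) = of_real (\<pi> a * A a b) * cnj (v a) * v b"
      by (simp only:) (simp add: mult_ac)
  qed
  finally have "Im L = 0" by (simp add: complex_eq_iff)
  moreover have "V > 0"
  proof -
    obtain x0 where "v x0 \<noteq> 0" using \<open>\<exists>x. v x \<noteq> 0\<close> by blast
    then have "0 < \<pi> x0 * (cmod (v x0))\<^sup>2" using pi_pos by simp
    also have "\<dots> \<le> V"
      unfolding V_def by (rule member_le_sum) (auto intro!: mult_nonneg_nonneg less_imp_le[OF pi_pos])
    finally show ?thesis .
  qed
  ultimately show ?thesis using L_eq by simp
qed

lemma size_proots_eq_degree_if_roots_real: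
  fixes p :: "real poly"
  assumes "p \<noteq> 0" and "\<And>z. poly (map_poly of_real p) z = 0 \<Longrightarrow> Im z = 0"
  shows "size (proots p) = degree p"
  using assms
proof (induction "degree p" arbitrary: p)
  case 0
  then show ?case using size_proots_le[of p] by simp
next
  case (Suc n)
  have "\<not> constant (poly (map_poly (of_real :: real \<Rightarrow> complex) p))"
    using Suc.hyps(2) constant_degree by (metis degree_map_poly of_real_eq_0_iff nat.simps(3))
  then obtain z where z: "poly (map_poly (of_real :: real \<Rightarrow> complex) p) z = 0"
    using fundamental_theorem_of_algebra by blast
  then have "z = of_real (Re z)" using Suc.prems by (simp add: complex_eq_iff)
  then have "poly p (Re z) = 0"
    using z poly_map_poly_of_real[of p "Re z", where 'a=complex] by (metis of_real_eq_0_iff)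
  then obtain q where q: "p = [:- Re z, 1:] * q" using poly_eq_0_iff_dvd by blast
  with Suc.prems have "q \<noteq> 0" by auto
  have "degree p = 1 + degree q" unfolding q using \<open>q \<noteq> 0\<close> by (subst degree_mult_eq) auto
  have roots_q: "Im w = 0" if "poly (map_poly of_real q) w = 0" for w
    using Suc.prems(2)[of w] that unfolding q map_poly_of_real_mult by simp
  have "size (proots q) = degree q"
    by (rule Suc.hyps(1)) (use Suc.hyps(2) \<open>degree p = 1 + degree q\<close> \<open>q \<noteq> 0\<close> roots_q in auto)
  moreover have "size (proots p) = 1 + size (proots q)"
    unfolding q using \<open>q \<noteq> 0\<close> by (subst proots_mult) auto
  ultimately show ?case using \<open>degree p = 1 + degree q\<close> by linarith
qed

lemma CARD_le_size_proots_charpoly: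
  fixes A :: "'x::finite \<Rightarrow> 'x \<Rightarrow> real"
  assumes "reversible_wrt \<pi> A" and "\<And>x. \<pi> x > 0"
  shows "CARD('x) \<le> size (proots (charpoly A))"
proof -
  have "size (proots (charpoly A)) = degree (charpoly A)"
    by (rule size_proots_eq_degree_if_roots_real[OF charpoly_neq_0])
      (rule reversible_charpoly_root_real[OF assms])
  then show ?thesis using CARD_le_degree_charpoly[of A] by simp
qed

lemma det_eq_row_sum_mult:
  fixes Y :: "'a::field^'n::finite^'n"
  assumes "\<And>i. (\<Sum>j\<in>UNIV. Y $ i $ j) = r"
  shows "det Y = r * det (\<chi> i j. if j = k then 1 else Y $ i $ j)"
proof -
  let ?Yt = "transpose Y"
  have "(\<Sum>j\<in>UNIV - {k}. row j ?Yt) \<in> vec.span {row j ?Yt | j. j \<noteq> k}"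
    by (intro vec.span_sum vec.span_base) auto
  from det_row_span[OF this]
  have "det ?Yt = det (\<chi> i. if i = k then row k ?Yt + (\<Sum>j\<in>UNIV - {k}. row j ?Yt) else row i ?Yt)"
    by simp
  also have "row k ?Yt + (\<Sum>j\<in>UNIV - {k}. row j ?Yt) = r *s 1"
  proof -
    have "row k ?Yt + (\<Sum>j\<in>UNIV - {k}. row j ?Yt) = (\<Sum>j\<in>UNIV. row j ?Yt)"
      by (simp add: sum.remove[of UNIV k])
    also have "\<dots> = r *s 1"
      using assms by (simp add: vec_eq_iff row_def transpose_def sum_component)
    finally show ?thesis .
  qed
  also have "det (\<chi> i. if i = k then r *s 1 else row i ?Yt) =
      r * det (\<chi> i. if i = k then 1 else row i ?Yt)"
    by (rule det_row_mul)
  also have "(\<chi> i. if i = k then 1 else row i ?Yt) = transpose (\<chi> i j. if j = k then 1 else Y $ i $ j)"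
    by (simp add: vec_eq_iff row_def transpose_def)
  finally show ?thesis by simp
qed

lemma det_identity_add_row:
  fixes w :: "'a::field^'n::finite"
  assumes "w $ k = 0"
  shows "det (\<chi> i. if i = k then axis k 1 + w else axis i 1) = 1"
proof -
  have rows: "row i (mat 1 :: 'a^'n^'n) = axis i 1" for i
    by (simp add: vec_eq_iff row_def mat_def axis_def)
  have "w = (\<Sum>j\<in>UNIV - {k}. w $ j *s axis j 1)"
    using basis_expansion[of w] assms by (simp add: sum.remove[of UNIV k])
  also have "\<dots> \<in> vec.span {row j (mat 1 :: 'a^'n^'n) | j. j \<noteq> k}"
    unfolding rows by (intro vec.span_sum vec.span_scale vec.span_base) auto
  finally have "w \<in> vec.span {row j (mat 1 :: 'a^'n^'n) | j. j \<noteq> k}" .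
  from det_row_span[OF this]
  have "det (\<chi> i. if i = k then row k (mat 1) + w else row i (mat 1 :: 'a^'n^'n)) = 1"
    by simp
  then show ?thesis unfolding rows .
qed

lemma det_subtract_from_ones_column:
  fixes M :: "'a::field^'n::finite^'n" and b :: "'n \<Rightarrow> 'a"
  shows "det (\<chi> i j. if j = k then 1 else M $ i $ j - b j) = det (\<chi> i j. if j = k then 1 else M $ i $ j)"
proof -
  define Z :: "'a^'n^'n" where "Z = (\<chi> i j. if j = k then 1 else M $ i $ j)"
  define w :: "'a^'n" where "w = (\<chi> j. if j = k then 0 else - b j)"
  define K :: "'a^'n^'n" where "K = (\<chi> i. if i = k then axis k 1 + w else axis i 1)"
  have K_entry: "K $ l $ j = (if l = k then (if j = k then 1 else - b j) else (if l = j then 1 else 0))"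
    for l j by (simp add: K_def w_def axis_def)
  have "(\<Sum>l\<in>UNIV. Z $ i $ l * K $ l $ j) = (if j = k then 1 else M $ i $ j - b j)" for i j
  proof -
    have "(\<Sum>l\<in>UNIV - {k}. Z $ i $ l * K $ l $ j) = (\<Sum>l\<in>UNIV - {k}. if l = j then M $ i $ j else 0)"
      by (intro sum.cong) (auto simp: Z_def K_entry)
    then have "(\<Sum>l\<in>UNIV. Z $ i $ l * K $ l $ j) = K $ k $ j + (if j = k then 0 else M $ i $ j)"
      by (simp add: sum.remove[of UNIV k] Z_def)
    then show ?thesis by (simp add: K_entry)
  qed
  then have "Z ** K = (\<chi> i j. if j = k then 1 else M $ i $ j - b j)"
    by (simp add: vec_eq_iff matrix_matrix_mult_def)
  moreover have "det K = 1"
    unfolding K_def by (rule det_identity_add_row) (simp add: w_def)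
  ultimately show ?thesis by (simp add: det_mul Z_def flip: \<open>Z ** K = _\<close>)
qed

text \<open>The rank-one update \<open>A + \<one> b\<^sup>T\<close> moves the eigenvalue \<open>\<mu>\<close> (eigenvector \<open>\<one>\<close>) to
  \<open>\<mu> + \<Sum> b\<close> and leaves the rest of the spectrum unchanged.\<close>
lemma det_rank_one_update:
  fixes A :: "'n::finite \<Rightarrow> 'n \<Rightarrow> real" and b :: "'n \<Rightarrow> real"
  assumes row_sum: "\<And>x. (\<Sum>y\<in>UNIV. A x y) = \<mu>" and b_sum: "(\<Sum>y\<in>UNIV. b y) = a"
  shows "(t - \<mu>) * det (\<chi> i j. (if i = j then t else 0) - (A i j + b j)) =
    (t - \<mu> - a) * det (\<chi> i j. (if i = j then t else 0) - A i j)"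
proof -
  fix k :: 'n
  define M :: "real^'n^'n" where "M = (\<chi> i j. (if i = j then t else 0) - A i j)"
  define X :: "real^'n^'n" where "X = (\<chi> i j. (if i = j then t else 0) - (A i j + b j))"
  have M_row_sum: "(\<Sum>j\<in>UNIV. M $ i $ j) = t - \<mu>" for i
    unfolding M_def using row_sum by (simp add: sum_subtractf)
  have X_row_sum: "(\<Sum>j\<in>UNIV. X $ i $ j) = t - \<mu> - a" for i
  proof -
    have "(\<Sum>j\<in>UNIV. X $ i $ j) = (\<Sum>j\<in>UNIV. M $ i $ j) - (\<Sum>j\<in>UNIV. b j)"
      unfolding X_def M_def by (simp add: sum_subtractf[symmetric] algebra_simps)
    then show ?thesis using M_row_sum b_sum by simp
  qed
  have "(\<chi> i j. if j = k then 1 else X $ i $ j) = (\<chi> i j. if j = k then 1 else M $ i $ j - b j)"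
    by (simp add: vec_eq_iff X_def M_def)
  then have same_det: "det (\<chi> i j. if j = k then 1 else X $ i $ j) = det (\<chi> i j. if j = k then 1 else M $ i $ j)"
    by (simp add: det_subtract_from_ones_column)
  have "(t - \<mu>) * det X = (t - \<mu>) * ((t - \<mu> - a) * det (\<chi> i j. if j = k then 1 else X $ i $ j))"
    using det_eq_row_sum_mult[of X "t - \<mu> - a" k] X_row_sum by simp
  also have "\<dots> = (t - \<mu> - a) * ((t - \<mu>) * det (\<chi> i j. if j = k then 1 else M $ i $ j))"
    unfolding same_det by simp
  also have "(t - \<mu>) * det (\<chi> i j. if j = k then 1 else M $ i $ j) = det M"
    using det_eq_row_sum_mult[of M "t - \<mu>" k] M_row_sum by simp
  finally show ?thesis unfolding M_def X_def .
qed

lemma proots_charpoly_rank_one_update: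
  fixes A :: "'n::finite \<Rightarrow> 'n \<Rightarrow> real" and b :: "'n \<Rightarrow> real"
  assumes "\<And>x. (\<Sum>y\<in>UNIV. A x y) = \<mu>" and "(\<Sum>y\<in>UNIV. b y) = a"
  shows "proots (charpoly (\<lambda>x y. A x y + b y)) + {#\<mu>#} = proots (charpoly A) + {#\<mu> + a#}"
proof -
  have "[:- \<mu>, 1:] * charpoly (\<lambda>x y. A x y + b y) = [:- (\<mu> + a), 1:] * charpoly A"
  proof (rule poly_eq_poly_eq_iff[THEN iffD1], rule ext)
    fix t
    show "poly ([:- \<mu>, 1:] * charpoly (\<lambda>x y. A x y + b y)) t = poly ([:- (\<mu> + a), 1:] * charpoly A) t"
      using det_rank_one_update[OF assms, of t] by (simp add: poly_charpoly algebra_simps)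
  qed
  then have "proots ([:- \<mu>, 1:] * charpoly (\<lambda>x y. A x y + b y)) =
      proots ([:- (\<mu> + a), 1:] * charpoly A)"
    by (rule arg_cong)
  moreover have "proots ([:- \<mu>, 1:] * charpoly (\<lambda>x y. A x y + b y)) =
      {#\<mu>#} + proots (charpoly (\<lambda>x y. A x y + b y))"
    by (subst proots_mult) (simp_all add: charpoly_neq_0)
  moreover have "proots ([:- (\<mu> + a), 1:] * charpoly A) = {#\<mu> + a#} + proots (charpoly A)"
    by (subst proots_mult) (simp_all add: charpoly_neq_0)
  ultimately show ?thesis by (simp add: add.commute)
qed

lemma rank_one_update_eigenvector:
  fixes A :: "'n::finite \<Rightarrow> 'n \<Rightarrow> real"
  assumes left_eig: "\<And>y. (\<Sum>x\<in>UNIV. \<pi> x * A x y) = \<mu> * \<pi> y" and pi_sum: "(\<Sum>x\<in>UNIV. \<pi> x) = 1"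
    and eig: "\<And>x. (\<Sum>y\<in>UNIV. (A x y + a * \<pi> y) * f y) = r * f x" and "r \<noteq> \<mu> + a"
  shows "(\<Sum>x\<in>UNIV. \<pi> x * f x) = 0" and "\<And>x. (\<Sum>y\<in>UNIV. A x y * f y) = r * f x"
proof -
  define s where "s = (\<Sum>x\<in>UNIV. \<pi> x * f x)"
  have eig': "(\<Sum>y\<in>UNIV. A x y * f y) + a * s = r * f x" for x
  proof -
    have "(\<Sum>y\<in>UNIV. (A x y + a * \<pi> y) * f y) = (\<Sum>y\<in>UNIV. A x y * f y) + a * s"
      unfolding s_def by (simp add: distrib_right sum.distrib sum_distrib_left mult.assoc)
    then show ?thesis using eig[of x] by simp
  qed
  have "(\<Sum>x\<in>UNIV. \<pi> x * (\<Sum>y\<in>UNIV. A x y * f y)) = (\<Sum>x\<in>UNIV. \<Sum>y\<in>UNIV. \<pi> x * A x y * f y)"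
    by (simp add: sum_distrib_left mult.assoc)
  also have "\<dots> = (\<Sum>y\<in>UNIV. \<Sum>x\<in>UNIV. \<pi> x * A x y * f y)"
    by (rule sum.swap)
  also have "\<dots> = \<mu> * s"
    unfolding s_def sum_distrib_right[symmetric] left_eig by (simp add: sum_distrib_left mult.assoc)
  finally have pi_A_f: "(\<Sum>x\<in>UNIV. \<pi> x * (\<Sum>y\<in>UNIV. A x y * f y)) = \<mu> * s" .
  have "r * s = (\<Sum>x\<in>UNIV. \<pi> x * (r * f x))"
    unfolding s_def by (simp add: sum_distrib_left mult_ac)
  also have "\<dots> = (\<Sum>x\<in>UNIV. \<pi> x * (\<Sum>y\<in>UNIV. A x y * f y)) + a * s * (\<Sum>x\<in>UNIV. \<pi> x)"
    unfolding eig'[symmetric] by (simp add: distrib_left sum.distrib sum_distrib_left mult_ac)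
  also have "\<dots> = (\<mu> + a) * s"
    unfolding pi_A_f pi_sum by (simp add: distrib_right)
  finally have "r * s = (\<mu> + a) * s" .
  then have "s = 0" using \<open>r \<noteq> \<mu> + a\<close> by simp
  then show "(\<Sum>x\<in>UNIV. \<pi> x * f x) = 0" and "(\<Sum>y\<in>UNIV. A x y * f y) = r * f x" for x
    using eig'[of x] by (simp_all add: s_def)
qed

lemma lambda2_mem_proots_charpoly:
  assumes "proots (charpoly A) = add_mset \<mu> R" and "R \<noteq> {#}" and "\<And>r. r \<in># R \<Longrightarrow> r \<le> \<mu>"
  shows "lambda2 A \<in># R"
proof -
  define L where "L = sorted_list_of_multiset R"
  have "insort \<mu> L = L @ [\<mu>]"
    by (rule sorted_insort_is_snoc) (auto simp: L_def assms(3))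
  then have "eigenvalues_desc A = \<mu> # rev L"
    by (simp add: eigenvalues_desc_def assms(1) L_def)
  moreover have "L \<noteq> []"
    using \<open>R \<noteq> {#}\<close> by (metis L_def mset.simps(1) mset_sorted_list_of_multiset)
  ultimately have "lambda2 A = last L"
    by (simp add: lambda2_def hd_conv_nth[symmetric] hd_rev)
  then show ?thesis using \<open>L \<noteq> []\<close> last_in_set by (fastforce simp: L_def)
qed

lemma reversible_left_eigenvector:
  fixes A :: "'x::finite \<Rightarrow> 'x \<Rightarrow> real"
  assumes "reversible_wrt \<pi> A" and "\<And>x. (\<Sum>y\<in>UNIV. A x y) = \<mu>"
  shows "(\<Sum>x\<in>UNIV. \<pi> x * A x y) = \<mu> * \<pi> y"
proof -
  have "(\<Sum>x\<in>UNIV. \<pi> x * A x y) = (\<Sum>x\<in>UNIV. \<pi> y * A y x)"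
    using assms(1) by (simp add: reversible_wrt_def)
  then show ?thesis using assms(2)[of y] by (simp add: sum_distrib_left[symmetric] mult.commute)
qed

lemma lambda2_le_if_mean_zero_eigenvalues_le:
  fixes A :: "'x::finite \<Rightarrow> 'x \<Rightarrow> real"
  assumes rev: "reversible_wrt \<pi> A" and pi_pos: "\<And>x. \<pi> x > 0" and pi_sum: "(\<Sum>x\<in>UNIV. \<pi> x) = 1"
    and row_sum: "\<And>x. (\<Sum>y\<in>UNIV. A x y) = \<mu>" and card: "CARD('x) \<ge> 2" and "c \<ge> 0"
    and mean_zero: "\<And>f r. \<exists>x. f x \<noteq> 0 \<Longrightarrow> (\<Sum>x\<in>UNIV. \<pi> x * f x) = 0 \<Longrightarrow>
      (\<And>x. (\<Sum>y\<in>UNIV. A x y * f y) = r * f x) \<Longrightarrow> r \<le> \<mu> - c"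
  shows "lambda2 A \<le> \<mu> - c"
proof -
  \<comment> \<open>deflate the eigenvalue \<open>\<mu>\<close> (right eigenvector \<open>\<one>\<close>, left eigenvector \<open>\<pi>\<close>) below \<open>\<mu> - c\<close>\<close>
  define a where "a = - (c + 1)"
  define A' where "A' = (\<lambda>x y. A x y + a * \<pi> y)"
  have roots: "proots (charpoly A') + {#\<mu>#} = proots (charpoly A) + {#\<mu> + a#}"
    unfolding A'_def using pi_sum
    by (intro proots_charpoly_rank_one_update row_sum) (simp add: sum_distrib_left[symmetric])
  note left_eig = reversible_left_eigenvector[OF rev row_sum]
  have root_le: "r \<le> \<mu> - c" if "r \<in># proots (charpoly A')" for r
  proof (cases "r = \<mu> + a")
    case False
    have "poly (charpoly A') r = 0" using that charpoly_neq_0[of A'] by simp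
    from charpoly_root_imp_eigenvector[OF this] obtain f
      where f_nz: "\<exists>x. f x \<noteq> 0" and f_eig: "\<forall>x. (\<Sum>y\<in>UNIV. A' x y * f y) = r * f x"
      by blast
    have "\<And>x. (\<Sum>y\<in>UNIV. (A x y + a * \<pi> y) * f y) = r * f x" using f_eig by (simp add: A'_def)
    note mean_zero_eig = rank_one_update_eigenvector[OF left_eig pi_sum this False]
    show ?thesis by (rule mean_zero[OF f_nz]) (simp_all add: mean_zero_eig)
  qed (simp add: a_def)
  have "\<mu> \<noteq> \<mu> + a" using \<open>c \<ge> 0\<close> by (simp add: a_def)
  define R where "R = proots (charpoly A') - {#\<mu> + a#}"
  have "add_mset \<mu> (proots (charpoly A')) = add_mset (\<mu> + a) (proots (charpoly A))"
    using roots by simp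
  then have A'_roots: "proots (charpoly A') = add_mset (\<mu> + a) (proots (charpoly A) - {#\<mu>#})"
    and R_eq: "proots (charpoly A) = add_mset \<mu> R"
    unfolding add_eq_conv_diff R_def using \<open>\<mu> \<noteq> \<mu> + a\<close> by blast+
  have a_root: "\<mu> + a \<in># proots (charpoly A')" by (subst A'_roots) simp
  have "reversible_wrt \<pi> A'" using rev by (simp add: reversible_wrt_def A'_def algebra_simps)
  then have "CARD('x) \<le> size (proots (charpoly A'))"
    using pi_pos by (rule CARD_le_size_proots_charpoly)
  moreover have "size R = size (proots (charpoly A')) - 1"
    using a_root by (simp add: R_def size_Diff_singleton)
  ultimately have "R \<noteq> {#}" using card by auto
  have R_le: "r \<le> \<mu> - c" if "r \<in># R" for r
    using root_le[OF in_diffD[OF that[unfolded R_def]]] .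
  have "lambda2 A \<in># R"
    by (rule lambda2_mem_proots_charpoly[OF R_eq \<open>R \<noteq> {#}\<close>]) (use R_le \<open>c \<ge> 0\<close> in force)
  then show ?thesis by (rule R_le)
qed

lemma weighted_sum_sq_le_sum_sq_diff:
  fixes w f :: "'a \<Rightarrow> real"
  assumes "\<And>x. x \<in> S \<Longrightarrow> w x \<ge> 0" and "(\<Sum>x\<in>S. w x * f x) = 0"
  shows "(\<Sum>x\<in>S. w x * (f x)\<^sup>2) \<le> (\<Sum>x\<in>S. w x * (f x - c)\<^sup>2)"
proof -
  have "(\<Sum>x\<in>S. w x * (f x - c)\<^sup>2) =
      (\<Sum>x\<in>S. w x * (f x)\<^sup>2) - 2 * c * (\<Sum>x\<in>S. w x * f x) + c\<^sup>2 * (\<Sum>x\<in>S. w x)"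
    by (simp add: power2_diff algebra_simps sum.distrib sum_subtractf sum_distrib_left sum_distrib_right)
  moreover have "c\<^sup>2 * (\<Sum>x\<in>S. w x) \<ge> 0" using assms(1) by (simp add: sum_nonneg)
  ultimately show ?thesis using assms(2) by simp
qed

lemma Cauchy_Schwarz_ineq_sum_weighted:
  fixes a w :: "'i \<Rightarrow> real"
  assumes "\<And>i. i \<in> I \<Longrightarrow> w i > 0"
  shows "(\<Sum>i\<in>I. a i)\<^sup>2 \<le> (\<Sum>i\<in>I. w i) * (\<Sum>i\<in>I. (a i)\<^sup>2 / w i)"
proof -
  have "(\<Sum>i\<in>I. a i) = (\<Sum>i\<in>I. sqrt (w i) * (a i / sqrt (w i)))"
  proof (rule sum.cong[OF refl])
    fix i assume "i \<in> I"
    then have "w i > 0" by (rule assms)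
    then show "a i = sqrt (w i) * (a i / sqrt (w i))" by simp
  qed
  then have "(\<Sum>i\<in>I. a i)\<^sup>2 \<le> (\<Sum>i\<in>I. (sqrt (w i))\<^sup>2) * (\<Sum>i\<in>I. (a i / sqrt (w i))\<^sup>2)"
    using Cauchy_Schwarz_ineq_sum by metis
  also have "\<dots> = (\<Sum>i\<in>I. w i) * (\<Sum>i\<in>I. (a i)\<^sup>2 / w i)"
    using assms by (simp add: power_divide less_imp_le)
  finally show ?thesis .
qed

lemma dirichlet_form_eigenvector:
  fixes A :: "'x::finite \<Rightarrow> 'x \<Rightarrow> real"
  assumes rev: "reversible_wrt \<pi> A" and row_sum: "\<And>x. (\<Sum>y\<in>UNIV. A x y) = \<mu>"
    and eig: "\<And>x. (\<Sum>y\<in>UNIV. A x y * f y) = r * f x"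
  shows "(\<Sum>x\<in>UNIV. \<Sum>y\<in>UNIV. \<pi> x * A x y * (f x - f y)\<^sup>2) = 2 * (\<mu> - r) * (\<Sum>x\<in>UNIV. \<pi> x * (f x)\<^sup>2)"
proof -
  define V where "V = (\<Sum>x\<in>UNIV. \<pi> x * (f x)\<^sup>2)"
  have "(\<Sum>x\<in>UNIV. \<Sum>y\<in>UNIV. \<pi> x * A x y * (f x)\<^sup>2) = (\<Sum>x\<in>UNIV. \<pi> x * (f x)\<^sup>2 * (\<Sum>y\<in>UNIV. A x y))"
    by (simp add: sum_distrib_left sum_distrib_right mult_ac)
  then have diag: "(\<Sum>x\<in>UNIV. \<Sum>y\<in>UNIV. \<pi> x * A x y * (f x)\<^sup>2) = \<mu> * V"
    by (simp add: row_sum V_def sum_distrib_left mult_ac)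
  have "(\<Sum>x\<in>UNIV. \<Sum>y\<in>UNIV. \<pi> x * A x y * (f y)\<^sup>2) = (\<Sum>x\<in>UNIV. \<Sum>y\<in>UNIV. \<pi> y * A y x * (f y)\<^sup>2)"
    using rev by (simp add: reversible_wrt_def)
  also have "\<dots> = (\<Sum>y\<in>UNIV. \<Sum>x\<in>UNIV. \<pi> y * A y x * (f y)\<^sup>2)"
    by (rule sum.swap)
  finally have diag': "(\<Sum>x\<in>UNIV. \<Sum>y\<in>UNIV. \<pi> x * A x y * (f y)\<^sup>2) = \<mu> * V"
    using diag by simp
  have cross: "(\<Sum>x\<in>UNIV. \<Sum>y\<in>UNIV. \<pi> x * A x y * (f x * f y)) = r * V"
  proof -
    have "(\<Sum>x\<in>UNIV. \<Sum>y\<in>UNIV. \<pi> x * A x y * (f x * f y)) =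
        (\<Sum>x\<in>UNIV. \<pi> x * f x * (\<Sum>y\<in>UNIV. A x y * f y))"
      by (simp add: sum_distrib_left mult_ac)
    also have "\<dots> = r * V"
      unfolding eig V_def by (simp add: sum_distrib_left power2_eq_square mult_ac)
    finally show ?thesis .
  qed
  have "(\<Sum>x\<in>UNIV. \<Sum>y\<in>UNIV. \<pi> x * A x y * (f x - f y)\<^sup>2) =
      (\<Sum>x\<in>UNIV. \<Sum>y\<in>UNIV. \<pi> x * A x y * (f x)\<^sup>2) - 2 * (\<Sum>x\<in>UNIV. \<Sum>y\<in>UNIV. \<pi> x * A x y * (f x * f y))
      + (\<Sum>x\<in>UNIV. \<Sum>y\<in>UNIV. \<pi> x * A x y * (f y)\<^sup>2)"
    by (simp add: power2_diff algebra_simps sum.distrib sum_subtractf sum_distrib_left)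
  then show ?thesis unfolding diag diag' cross V_def by (simp add: algebra_simps)
qed

text \<open>For \<open>q = p powr (-(\<nu> - \<alpha>) / 2)\<close> the fibre bound holds
  because a state \<open>y \<noteq> xstar\<close> has at most \<open>p powr \<alpha>\<close> preimages (they lie in \<open>N y\<close>), each
  lighter than \<open>y\<close> by the factor \<open>p powr \<nu>\<close>.\<close>
locale ascent_operator =
  fixes \<pi> :: "'x::finite \<Rightarrow> real" and xstar :: 'x and T :: "'x \<Rightarrow> 'x" and q :: real
  assumes pi_pos: "\<And>x. \<pi> x > 0"
    and T_xstar: "T xstar = xstar"
    and pi_T_gt: "\<And>x. x \<noteq> xstar \<Longrightarrow> \<pi> x < \<pi> (T x)"
    and q_pos: "0 < q" and q_lt_1: "q < 1"
    and preimage_mass_le: "\<And>y. y \<noteq> xstar \<Longrightarrow> (\<Sum>x | T x = y. \<pi> x) \<le> q\<^sup>2 * \<pi> y"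
begin

lemma T_neq: "x \<noteq> xstar \<Longrightarrow> T x \<noteq> x"
  using pi_T_gt by fastforce

lemma funpow_T_xstar: "(T ^^ n) xstar = xstar"
  by (induction n) (simp_all add: T_xstar)

text \<open>Each step away from \<open>xstar\<close> strictly raises \<open>\<pi>\<close>, so it lowers the number of states
  above the current one.\<close>
lemma funpow_T_eq_xstar: "card {y. \<pi> x < \<pi> y} \<le> n \<Longrightarrow> (T ^^ n) x = xstar"
proof (induction n arbitrary: x)
  case 0
  then have "x = xstar" using pi_T_gt by fastforce
  then show ?case by simp
next
  case (Suc n)
  show ?case
  proof (cases "x = xstar")
    case True
    then show ?thesis using funpow_T_xstar[of "Suc n"] by simp
  next
    case False
    have "{y. \<pi> (T x) < \<pi> y} \<subset> {y. \<pi> x < \<pi> y}"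
      using pi_T_gt[OF False] by auto
    then have "card {y. \<pi> (T x) < \<pi> y} < card {y. \<pi> x < \<pi> y}"
      by (rule psubset_card_mono[rotated]) simp
    then have "(T ^^ n) (T x) = xstar" using Suc by simp
    then show ?thesis by (simp add: funpow_Suc_right del: funpow.simps)
  qed
qed

lemma funpow_CARD_T_eq_xstar: "(T ^^ CARD('x)) x = xstar"
  by (rule funpow_T_eq_xstar) (simp add: card_mono)

lemma sum_pi_comp_T_le:
  assumes "\<And>y. h y \<ge> 0" and "h xstar = 0"
  shows "(\<Sum>x\<in>UNIV. \<pi> x * h (T x)) \<le> q\<^sup>2 * (\<Sum>y\<in>UNIV. \<pi> y * h y)"
proof -
  have "(\<Sum>x\<in>UNIV. \<pi> x * h (T x)) = (\<Sum>y\<in>UNIV. (\<Sum>x | T x = y. \<pi> x) * h y)"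
    using sum.group[of UNIV UNIV T "\<lambda>x. \<pi> x * h (T x)"] by (simp add: sum_distrib_right)
  also have "\<dots> \<le> (\<Sum>y\<in>UNIV. q\<^sup>2 * (\<pi> y * h y))"
  proof (rule sum_mono)
    fix y
    show "(\<Sum>x | T x = y. \<pi> x) * h y \<le> q\<^sup>2 * (\<pi> y * h y)"
      using preimage_mass_le[of y] assms mult_right_mono
      by (cases "y = xstar") (auto simp: mult.assoc[symmetric])
  qed
  finally show ?thesis by (simp add: sum_distrib_left)
qed

lemma sum_pi_comp_funpow_T_le:
  assumes "\<And>y. h y \<ge> 0" and "h xstar = 0"
  shows "(\<Sum>x\<in>UNIV. \<pi> x * h ((T ^^ n) x)) \<le> q ^ (2 * n) * (\<Sum>y\<in>UNIV. \<pi> y * h y)"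
proof (induction n)
  case (Suc n)
  have "(\<Sum>x\<in>UNIV. \<pi> x * h ((T ^^ Suc n) x)) \<le> q\<^sup>2 * (\<Sum>y\<in>UNIV. \<pi> y * h ((T ^^ n) y))"
    using sum_pi_comp_T_le[of "\<lambda>z. h ((T ^^ n) z)"] assms funpow_T_xstar
    by (simp add: funpow_Suc_right del: funpow.simps)
  also have "\<dots> \<le> q\<^sup>2 * (q ^ (2 * n) * (\<Sum>y\<in>UNIV. \<pi> y * h y))"
    using Suc.IH by (rule mult_left_mono) simp
  finally show ?case by (simp add: power2_eq_square mult.assoc)
qed simp

lemma geometric_sum_q_le: "(\<Sum>i<n. q ^ i) \<le> 1 / (1 - q)"
  using q_pos q_lt_1 by (simp add: sum_gp_strict divide_right_mono)

text \<open>Telescope \<open>f x - f xstar\<close> along the \<open>T\<close>-orbit of \<open>x\<close> and weight the \<open>i\<close>-th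
  increment by \<open>1 / q ^ i\<close> in Cauchy-Schwarz; the mass pushed forward by \<open>T ^^ i\<close> decays
  like \<open>q ^ (2 * i)\<close>, which more than compensates.\<close>
lemma sq_diff_xstar_le:
  "(f x - f xstar)\<^sup>2 \<le> (\<Sum>i<CARD('x). (f ((T ^^ i) x) - f (T ((T ^^ i) x)))\<^sup>2 / q ^ i) / (1 - q)"
proof -
  let ?K = "CARD('x)"
  have "f x - f xstar = (\<Sum>i<?K. f ((T ^^ i) x) - f (T ((T ^^ i) x)))"
    using sum_lessThan_telescope'[of "\<lambda>i. f ((T ^^ i) x)" ?K] funpow_CARD_T_eq_xstar[of x] by simp
  then have "(f x - f xstar)\<^sup>2 \<le>
      (\<Sum>i<?K. q ^ i) * (\<Sum>i<?K. (f ((T ^^ i) x) - f (T ((T ^^ i) x)))\<^sup>2 / q ^ i)"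
    using Cauchy_Schwarz_ineq_sum_weighted[of "{..<?K}" "\<lambda>i. q ^ i"] q_pos by simp
  also have "\<dots> \<le> 1 / (1 - q) * (\<Sum>i<?K. (f ((T ^^ i) x) - f (T ((T ^^ i) x)))\<^sup>2 / q ^ i)"
    using geometric_sum_q_le
    by (rule mult_right_mono) (intro sum_nonneg divide_nonneg_pos zero_le_power2 zero_less_power q_pos)
  finally show ?thesis by simp
qed

lemma sum_pi_sq_diff_xstar_le:
  "(\<Sum>x\<in>UNIV. \<pi> x * (f x - f xstar)\<^sup>2) \<le> (\<Sum>x\<in>UNIV. \<pi> x * (f x - f (T x))\<^sup>2) / (1 - q)\<^sup>2"
proof -
  let ?K = "CARD('x)"
  define g where "g z = (f z - f (T z))\<^sup>2" for z
  define S where "S = (\<Sum>x\<in>UNIV. \<pi> x * g x)"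
  have g_nonneg: "g y \<ge> 0" for y by (simp add: g_def)
  have g_xstar: "g xstar = 0" by (simp add: g_def T_xstar)
  have "(\<Sum>x\<in>UNIV. \<pi> x * (f x - f xstar)\<^sup>2) \<le>
      (\<Sum>x\<in>UNIV. \<pi> x * ((\<Sum>i<?K. g ((T ^^ i) x) / q ^ i) / (1 - q)))"
    using sq_diff_xstar_le pi_pos unfolding g_def by (intro sum_mono mult_left_mono) (auto intro: less_imp_le)
  also have "\<dots> = (\<Sum>x\<in>UNIV. \<Sum>i<?K. \<pi> x * g ((T ^^ i) x) / q ^ i) / (1 - q)"
    by (simp add: sum_divide_distrib sum_distrib_left)
  also have "\<dots> = (\<Sum>i<?K. \<Sum>x\<in>UNIV. \<pi> x * g ((T ^^ i) x) / q ^ i) / (1 - q)"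
    by (subst sum.swap) (rule refl)
  also have "\<dots> = (\<Sum>i<?K. (\<Sum>x\<in>UNIV. \<pi> x * g ((T ^^ i) x)) / q ^ i) / (1 - q)"
    by (simp add: sum_divide_distrib)
  also have "\<dots> \<le> (\<Sum>i<?K. q ^ (2 * i) * S / q ^ i) / (1 - q)"
    using q_pos q_lt_1 sum_pi_comp_funpow_T_le[of g, OF g_nonneg g_xstar] unfolding S_def
    by (intro divide_right_mono sum_mono) auto
  also have "\<dots> = (\<Sum>i<?K. q ^ i) * S / (1 - q)"
  proof -
    have "q ^ (2 * i) * S / q ^ i = q ^ i * S" for i using q_pos by (simp add: mult_2 power_add)
    then show ?thesis by (simp add: sum_distrib_right)
  qed
  also have "\<dots> \<le> S / (1 - q)\<^sup>2"
  proof -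
    have "S \<ge> 0" unfolding S_def by (intro sum_nonneg mult_nonneg_nonneg less_imp_le[OF pi_pos] g_nonneg)
    then have "(\<Sum>i<?K. q ^ i) * S \<le> S / (1 - q)" using mult_right_mono[OF geometric_sum_q_le] by simp
    from divide_right_mono[OF this, of "1 - q"] show ?thesis using q_lt_1 by (simp add: power2_eq_square)
  qed
  finally show ?thesis by (simp add: S_def g_def)
qed

lemma poincare_mean_zero:
  assumes "(\<Sum>x\<in>UNIV. \<pi> x * f x) = 0"
  shows "(\<Sum>x\<in>UNIV. \<pi> x * (f x)\<^sup>2) \<le> (\<Sum>x\<in>UNIV. \<pi> x * (f x - f (T x))\<^sup>2) / (1 - q)\<^sup>2"
  using weighted_sum_sq_le_sum_sq_diff[of UNIV \<pi> f "f xstar"] pi_pos assms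
    sum_pi_sq_diff_xstar_le[of f]
  by (fastforce intro: less_imp_le order.trans)

lemma step_rate_energy_le_dirichlet_form:
  fixes A :: "'x \<Rightarrow> 'x \<Rightarrow> real"
  assumes offdiag: "\<And>x y. x \<noteq> y \<Longrightarrow> A x y \<ge> 0" and m_le: "\<And>x. x \<noteq> xstar \<Longrightarrow> m \<le> A x (T x)"
  shows "m * (\<Sum>x\<in>UNIV. \<pi> x * (f x - f (T x))\<^sup>2) \<le> (\<Sum>x\<in>UNIV. \<Sum>y\<in>UNIV. \<pi> x * A x y * (f x - f y)\<^sup>2)"
  unfolding sum_distrib_left
proof (rule sum_mono)
  fix x
  have "m * (\<pi> x * (f x - f (T x))\<^sup>2) \<le> \<pi> x * A x (T x) * (f x - f (T x))\<^sup>2"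
  proof (cases "x = xstar")
    case False
    then show ?thesis
      using mult_right_mono[OF m_le[OF False], of "\<pi> x * (f x - f (T x))\<^sup>2"] pi_pos[of x]
      by (simp add: mult_ac)
  qed (simp add: T_xstar)
  also have "\<dots> \<le> (\<Sum>y\<in>UNIV. \<pi> x * A x y * (f x - f y)\<^sup>2)"
  proof (rule member_le_sum)
    show "0 \<le> \<pi> x * A x y * (f x - f y)\<^sup>2" for y
      using offdiag[of x y] pi_pos[of x] by (cases "x = y") simp_all
  qed simp_all
  finally show "m * (\<pi> x * (f x - f (T x))\<^sup>2) \<le> (\<Sum>y\<in>UNIV. \<pi> x * A x y * (f x - f y)\<^sup>2)" .
qed

lemma eigenvalue_le_mean_zero:
  fixes A :: "'x \<Rightarrow> 'x \<Rightarrow> real"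
  assumes offdiag: "\<And>x y. x \<noteq> y \<Longrightarrow> A x y \<ge> 0" and rev: "reversible_wrt \<pi> A"
    and row_sum: "\<And>x. (\<Sum>y\<in>UNIV. A x y) = \<mu>"
    and "m \<ge> 0" and m_le: "\<And>x. x \<noteq> xstar \<Longrightarrow> m \<le> A x (T x)"
    and f_nz: "\<exists>x. f x \<noteq> 0" and mean_zero: "(\<Sum>x\<in>UNIV. \<pi> x * f x) = 0"
    and eig: "\<And>x. (\<Sum>y\<in>UNIV. A x y * f y) = r * f x"
  shows "r \<le> \<mu> - m * (1 - q)\<^sup>2 / 2"
proof -
  define V where "V = (\<Sum>x\<in>UNIV. \<pi> x * (f x)\<^sup>2)"
  define E where "E = (\<Sum>x\<in>UNIV. \<pi> x * (f x - f (T x))\<^sup>2)"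
  have "V > 0"
  proof -
    obtain x0 where "f x0 \<noteq> 0" using f_nz by blast
    then have "0 < \<pi> x0 * (f x0)\<^sup>2" using pi_pos by simp
    also have "\<dots> \<le> V"
      unfolding V_def by (rule member_le_sum) (auto intro!: mult_nonneg_nonneg less_imp_le[OF pi_pos])
    finally show ?thesis .
  qed
  have "m * E \<le> 2 * (\<mu> - r) * V"
    using step_rate_energy_le_dirichlet_form[where A = A and m = m, OF offdiag m_le, of f]
    unfolding dirichlet_form_eigenvector[OF rev row_sum eig] E_def V_def .
  moreover have "(1 - q)\<^sup>2 * V \<le> E"
    using poincare_mean_zero[OF mean_zero] q_lt_1 unfolding V_def E_def by (simp add: field_simps)
  ultimately have "m * (1 - q)\<^sup>2 * V \<le> 2 * (\<mu> - r) * V"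
    using mult_left_mono[of "(1 - q)\<^sup>2 * V" E m] \<open>m \<ge> 0\<close> by (simp add: mult.assoc)
  then have "m * (1 - q)\<^sup>2 \<le> 2 * (\<mu> - r)" using \<open>V > 0\<close> by simp
  then show ?thesis by simp
qed

lemma lambda2_le:
  fixes A :: "'x \<Rightarrow> 'x \<Rightarrow> real"
  assumes offdiag: "\<And>x y. x \<noteq> y \<Longrightarrow> A x y \<ge> 0" and rev: "reversible_wrt \<pi> A"
    and pi_sum: "(\<Sum>x\<in>UNIV. \<pi> x) = 1" and row_sum: "\<And>x. (\<Sum>y\<in>UNIV. A x y) = \<mu>"
    and card: "CARD('x) \<ge> 2" and "m \<ge> 0" and m_le: "\<And>x. x \<noteq> xstar \<Longrightarrow> m \<le> A x (T x)"
  shows "lambda2 A \<le> \<mu> - m * (1 - q)\<^sup>2 / 2"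
proof (rule lambda2_le_if_mean_zero_eigenvalues_le[OF rev pi_pos pi_sum row_sum card])
  show "0 \<le> m * (1 - q)\<^sup>2 / 2" using \<open>m \<ge> 0\<close> by simp
  fix f r
  assume "\<exists>x. f x \<noteq> 0" and "(\<Sum>x\<in>UNIV. \<pi> x * f x) = 0"
    and "\<And>x. (\<Sum>y\<in>UNIV. A x y * f y) = r * f x"
  from eigenvalue_le_mean_zero[OF offdiag rev row_sum \<open>m \<ge> 0\<close> m_le this]
  show "r \<le> \<mu> - m * (1 - q)\<^sup>2 / 2" .
qed

lemma Min_step_rate_nonneg:
  fixes A :: "'x \<Rightarrow> 'x \<Rightarrow> real"
  assumes offdiag: "\<And>x y. x \<noteq> y \<Longrightarrow> A x y \<ge> 0" and card: "CARD('x) \<ge> 2"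
  shows "0 \<le> Min ((\<lambda>x. A x (T x)) ` {x. x \<noteq> xstar})"
proof -
  have "{x. x \<noteq> xstar} \<noteq> {}"
  proof
    assume "{x. x \<noteq> xstar} = {}"
    then have "UNIV = {xstar}" by auto
    then have "CARD('x) = card {xstar}" by (rule arg_cong)
    with card show False by simp
  qed
  moreover have "0 \<le> A x (T x)" if "x \<noteq> xstar" for x
    using T_neq[OF that] by (intro offdiag) simp
  ultimately show ?thesis by (simp add: Min_ge_iff)
qed


lemma lambda2_le_Min_step_rate:
  fixes A :: "'x \<Rightarrow> 'x \<Rightarrow> real"
  assumes offdiag: "\<And>x y. x \<noteq> y \<Longrightarrow> A x y \<ge> 0" and rev: "reversible_wrt \<pi> A"
    and pi_sum: "(\<Sum>x\<in>UNIV. \<pi> x) = 1" and row_sum: "\<And>x. (\<Sum>y\<in>UNIV. A x y) = \<mu>"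
    and card: "CARD('x) \<ge> 2"
  shows "lambda2 A \<le> \<mu> - (1 - q)\<^sup>2 / 2 * Min ((\<lambda>x. A x (T x)) ` {x. x \<noteq> xstar})"
proof -
  let ?m = "Min ((\<lambda>x. A x (T x)) ` {x. x \<noteq> xstar})"
  have m_le: "?m \<le> A x (T x)" if "x \<noteq> xstar" for x
    using that by (intro Min_le) auto
  from offdiag rev pi_sum row_sum card Min_step_rate_nonneg[OF offdiag card] m_le
  have "lambda2 A \<le> \<mu> - ?m * (1 - q)\<^sup>2 / 2"
    by (rule lambda2_le)
  then show ?thesis by (simp add: mult.commute)
qed
end

lemma ascent_operator_if_neighbourhood_ascent:
  fixes \<pi> :: "'x::finite \<Rightarrow> real" and N :: "'x \<Rightarrow> 'x set"
  assumes pi_pos: "\<And>x. \<pi> x > 0" and "p > 1" and "\<alpha> > 0" and "\<nu> > \<alpha>"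
    and N_sym: "symmetric_nbhd N" and N_card: "\<And>x. real (card (N x)) \<le> p powr \<alpha>"
    and T_fix: "T xstar = xstar" and T_nbhd: "\<And>x. x \<noteq> xstar \<Longrightarrow> T x \<in> N x"
    and T_incr: "\<And>x. x \<noteq> xstar \<Longrightarrow> p powr \<nu> * \<pi> x \<le> \<pi> (T x)"
  shows "ascent_operator \<pi> xstar T (p powr (-(\<nu> - \<alpha>) / 2))"
proof
  let ?q = "p powr (-(\<nu> - \<alpha>) / 2)"
  have "p powr \<nu> > 1" using \<open>p > 1\<close> \<open>\<nu> > \<alpha>\<close> \<open>\<alpha> > 0\<close> by (intro gr_one_powr) auto
  show "\<pi> x > 0" for x by (rule pi_pos)
  show "T xstar = xstar" by (rule T_fix)
  show "\<pi> x < \<pi> (T x)" if "x \<noteq> xstar" for x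
    using T_incr[OF that] mult_strict_right_mono[OF \<open>p powr \<nu> > 1\<close> pi_pos[of x]] by simp
  show "0 < ?q" using \<open>p > 1\<close> by simp
  show "?q < 1" using \<open>p > 1\<close> \<open>\<nu> > \<alpha>\<close> by (simp add: powr_less_one)
  have q_sq: "?q\<^sup>2 = p powr \<alpha> / p powr \<nu>"
    unfolding power2_eq_square powr_add[symmetric] using \<open>p > 1\<close> by (simp add: powr_diff)
  show "(\<Sum>x | T x = y. \<pi> x) \<le> ?q\<^sup>2 * \<pi> y" if "y \<noteq> xstar" for y
  proof -
    have preimage: "x \<noteq> xstar" "x \<in> N y" if "T x = y" for x
    proof -
      show "x \<noteq> xstar" using that \<open>y \<noteq> xstar\<close> T_fix by auto
      then have "y \<in> N x" using T_nbhd that by auto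
      then show "x \<in> N y" using N_sym by (simp add: symmetric_nbhd_def)
    qed
    have "(\<Sum>x | T x = y. \<pi> x) \<le> real (card {x. T x = y}) * (\<pi> y / p powr \<nu>)"
    proof (rule sum_bounded_above)
      fix x assume "x \<in> {x. T x = y}"
      then have "p powr \<nu> * \<pi> x \<le> \<pi> y" using T_incr preimage(1) by auto
      then show "\<pi> x \<le> \<pi> y / p powr \<nu>"
        using \<open>p > 1\<close> by (simp add: pos_le_divide_eq mult.commute)
    qed
    also have "\<dots> \<le> p powr \<alpha> * (\<pi> y / p powr \<nu>)"
    proof (rule mult_right_mono)
      have "card {x. T x = y} \<le> card (N y)" using preimage(2) by (intro card_mono) auto
      then show "real (card {x. T x = y}) \<le> p powr \<alpha>" using N_card[of y] by linarith
      show "0 \<le> \<pi> y / p powr \<nu>" using pi_pos[of y] \<open>p powr \<nu> > 1\<close> by simp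
    qed
    finally show ?thesis unfolding q_sq by simp
  qed
qed

theorem lemma3:
  fixes \<pi> :: "'x::finite \<Rightarrow> real"
    and p \<alpha> \<nu> :: real
    and N :: "'x \<Rightarrow> 'x set"
    and xstar :: 'x
    and T :: "'x \<Rightarrow> 'x"
  assumes card2: "CARD('x) \<ge> 2"
    and pi_dist: "prob_dist \<pi>"
    and pi_pos: "\<forall>x. \<pi> x > 0"
    and p_gt: "p > 1"
    and alpha_pos: "\<alpha> > 0"
    and N_sym: "symmetric_nbhd N"
    and N_card: "\<forall>x. real (card (N x)) \<le> p powr \<alpha>"
    and nu_gt: "\<nu> > \<alpha>"
    and T_fix: "T xstar = xstar"
    and T_nbhd: "\<forall>x. x \<noteq> xstar \<longrightarrow> T x \<in> N x"
    and T_incr: "\<forall>x. x \<noteq> xstar \<longrightarrow> \<pi> (T x) \<ge> p powr \<nu> * \<pi> x"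
  shows "(\<forall>P. transition_matrix P \<and> irreducible_mat P \<and> reversible_wrt \<pi> P \<longrightarrow>
            Gap_P P \<ge> kappa p \<alpha> \<nu> * Min ((\<lambda>x. P x (T x)) ` {x. x \<noteq> xstar}))
       \<and> (\<forall>Q. rate_matrix Q \<and> irreducible_mat Q \<and> reversible_wrt \<pi> Q \<longrightarrow>
            Gap_Q Q \<ge> kappa p \<alpha> \<nu> * Min ((\<lambda>x. Q x (T x)) ` {x. x \<noteq> xstar}))"
proof -
  define q where "q = p powr (-(\<nu> - \<alpha>) / 2)"
  interpret ascent_operator \<pi> xstar T q
    unfolding q_def
    using ascent_operator_if_neighbourhood_ascent[where \<pi> = \<pi> and N = N and T = T and xstar = xstar,
        OF pi_pos[rule_format] p_gt alpha_pos nu_gt N_sym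
        N_card[rule_format] T_fix T_nbhd[rule_format] T_incr[rule_format]] .
  have pi_sum: "(\<Sum>x\<in>UNIV. \<pi> x) = 1" using pi_dist by (simp add: prob_dist_def)
  have "kappa p \<alpha> \<nu> = (1 - q) ^ 3 / 2" by (simp add: kappa_def q_def)
  also have "\<dots> \<le> (1 - q)\<^sup>2 / 2" using power_decreasing[of 2 3 "1 - q"] q_pos q_lt_1 by simp
  finally have kappa_le: "kappa p \<alpha> \<nu> \<le> (1 - q)\<^sup>2 / 2" .
  have gap: "kappa p \<alpha> \<nu> * Min ((\<lambda>x. A x (T x)) ` {x. x \<noteq> xstar}) \<le> \<mu> - lambda2 A"
    if offdiag: "\<And>x y. x \<noteq> y \<Longrightarrow> A x y \<ge> 0" and row_sum: "\<And>x. (\<Sum>y\<in>UNIV. A x y) = \<mu>"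
      and rev: "reversible_wrt \<pi> A" for A :: "'x \<Rightarrow> 'x \<Rightarrow> real" and \<mu>
    using lambda2_le_Min_step_rate[OF offdiag rev pi_sum row_sum card2]
      mult_right_mono[OF kappa_le Min_step_rate_nonneg[where A = A, OF offdiag card2]]
    by simp
  show ?thesis
  proof (intro conjI allI impI)
    fix P :: "'x \<Rightarrow> 'x \<Rightarrow> real"
    assume "transition_matrix P \<and> irreducible_mat P \<and> reversible_wrt \<pi> P"
    then show "Gap_P P \<ge> kappa p \<alpha> \<nu> * Min ((\<lambda>x. P x (T x)) ` {x. x \<noteq> xstar})"
      unfolding Gap_P_def by (intro gap) (simp_all add: transition_matrix_def)
  next
    fix Q :: "'x \<Rightarrow> 'x \<Rightarrow> real"
    assume "rate_matrix Q \<and> irreducible_mat Q \<and> reversible_wrt \<pi> Q"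
    then show "Gap_Q Q \<ge> kappa p \<alpha> \<nu> * Min ((\<lambda>x. Q x (T x)) ` {x. x \<noteq> xstar})"
      unfolding Gap_Q_def using gap[of Q 0] by (simp add: rate_matrix_def)
  qed
qed

end
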